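(* Let $G$ be an unweighted digraph without loops and $M(t)$ its directed deformed graph Laplacian. Then $1$ is always an eigenvalue of $M(t)$, and its geometric multiplicity equals the number of connected components of the undirected part $G_U$ of $G$. Moreover, $-1$ is an eigenvalue of $M(t)$ if and only if $G_U$ has at least one bipartite connected component, and in that case its geometric multiplicity equals the number of bipartite connected components of $G_U$.
   Context: A digraph $G=(V,E)$, no loops or multiple edges, adjacency matrix $A$; $S=A\circ A^T$, $D=\mathrm{diag}(\mathrm{diag}(A^2))$; $M(t)=I-At+(D-I)t^2+(A-S)t^3$. The undirected part $G_U$ of $G$ is the undirected graph on $V$ whose edges are the pairs $\{i,j\}$ with both $(i,j),(j,i)\in E$ (adjacency matrix $S$); an isolated vertex of $G_U$ counts as a (bipartite) connected component. The geometric multiplicity of an eigenvalue $\lambda$ of $M(t)$ is $\dim\ker M(\lambda)$. *)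

theory Defs
  imports "HOL-Analysis.Analysis"
begin

definition adj_mat :: "('n::finite \<times> 'n) set \<Rightarrow> real^'n^'n" where
  "adj_mat E = (\<chi> i j. if (i, j) \<in> E then 1 else 0)"

definition sym_mat :: "('n::finite \<times> 'n) set \<Rightarrow> real^'n^'n" where
  "sym_mat E = (\<chi> i j. (adj_mat E) $ i $ j * (adj_mat E) $ j $ i)"

definition deg_mat :: "('n::finite \<times> 'n) set \<Rightarrow> real^'n^'n" where
  "deg_mat E = (\<chi> i j. if i = j then (adj_mat E ** adj_mat E) $ i $ i else 0)"

definition deformed_laplacian :: "('n::finite \<times> 'n) set \<Rightarrow> real \<Rightarrow> real^'n^'n" where
  "deformed_laplacian E t =
     mat 1 - t *\<^sub>R adj_mat E + (t^2) *\<^sub>R (deg_mat E - mat 1)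
       + (t^3) *\<^sub>R (adj_mat E - sym_mat E)"

definition is_eigenvalue :: "(real \<Rightarrow> real^'n^'n) \<Rightarrow> real \<Rightarrow> bool" where
  "is_eigenvalue M l \<longleftrightarrow> (\<exists>x. x \<noteq> 0 \<and> M l *v x = 0)"

definition geom_mult :: "(real \<Rightarrow> real^'n^'n) \<Rightarrow> real \<Rightarrow> nat" where
  "geom_mult M l = dim {x. M l *v x = 0}"

definition undir_edges :: "('n \<times> 'n) set \<Rightarrow> ('n \<times> 'n) set" where
  "undir_edges E = {(i, j). (i, j) \<in> E \<and> (j, i) \<in> E}"

text \<open>Connected components of G_U (isolated vertices are singleton components)\<close>
definition undir_components :: "('n \<times> 'n) set \<Rightarrow> 'n set set" where
  "undir_components E = UNIV // ((undir_edges E)\<^sup>*)"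

definition bipartite_on :: "('n \<times> 'n) set \<Rightarrow> 'n set \<Rightarrow> bool" where
  "bipartite_on E C \<longleftrightarrow>
     (\<exists>f :: 'n \<Rightarrow> bool. \<forall>i\<in>C. \<forall>j\<in>C. (i, j) \<in> undir_edges E \<longrightarrow> f i \<noteq> f j)"

end

theory Submission
  imports Defs
begin

text \<open>For \<open>\<sigma> = 1\<close> and \<open>\<sigma> = -1\<close> we have \<open>M(\<sigma>) = D - \<sigma> S\<close>, whose quadratic form is
  \<open>1/2 \<Sum>(x\<^sub>i - \<sigma> x\<^sub>j)\<^sup>2\<close> over the edges \<open>(i, j)\<close> of \<open>G\<^sub>U\<close>; so \<open>ker M(\<sigma>)\<close> consists of the
  vectors with \<open>x\<^sub>i = \<sigma> x\<^sub>j\<close> along every edge of \<open>G\<^sub>U\<close>. On a connected component such a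
  vector is determined by a single value, and it can be nonzero only if the component carries a
  nowhere-zero solution: always for \<open>\<sigma> = 1\<close>, and for \<open>\<sigma> = -1\<close> exactly when the component is
  bipartite. One such solution per component, extended by zero, gives an orthogonal basis of the
  kernel.\<close>

lemma equiv_rtrancl_sym: "sym R \<Longrightarrow> equiv UNIV (R\<^sup>*)"
  by (simp add: equiv_def refl_rtrancl trans_rtrancl sym_rtrancl)

lemma quotient_rtrancl_eq_Image:
  assumes "sym R" "C \<in> UNIV // R\<^sup>*" "i \<in> C"
  shows "C = R\<^sup>* `` {i}"
proof -
  obtain a where a: "C = R\<^sup>* `` {a}" using assms(2) by (auto elim: quotientE)
  with assms(3) have "(a, i) \<in> R\<^sup>*" by simp
  with a show ?thesis using equiv_class_eq_iff[OF equiv_rtrancl_sym[OF assms(1)]] by blast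
qed

lemma eq_along_rtrancl:
  assumes "\<And>j k. (j, k) \<in> R \<Longrightarrow> h j = h k" and "(a, b) \<in> R\<^sup>*"
  shows "h a = h b"
  using assms(2) by (induction rule: rtrancl_induct) (auto dest: assms(1))

definition signed_kernel :: "('n::finite \<times> 'n) set \<Rightarrow> real \<Rightarrow> (real^'n) set" where
  "signed_kernel R \<sigma> = {x. \<forall>(i, j)\<in>R. x$i = \<sigma> * x$j}"

definition signable :: "('n \<times> 'n) set \<Rightarrow> real \<Rightarrow> 'n set \<Rightarrow> bool" where
  "signable R \<sigma> C \<longleftrightarrow>
     (\<exists>g. (\<forall>i\<in>C. g i \<noteq> 0) \<and> (\<forall>i\<in>C. \<forall>j\<in>C. (i, j) \<in> R \<longrightarrow> g i = \<sigma> * g j))"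

definition component_vector :: "('n::finite \<times> 'n) set \<Rightarrow> real \<Rightarrow> 'n set \<Rightarrow> real^'n" where
  "component_vector R \<sigma> C = (SOME x. x \<in> signed_kernel R \<sigma> \<and> (\<forall>i. x$i \<noteq> 0 \<longleftrightarrow> i \<in> C))"

text \<open>No hypothesis \<open>y$i \<noteq> 0\<close> is needed: if it fails, both quotients are \<open>0\<close>.\<close>

lemma signed_kernel_quotient_eq:
  assumes "x \<in> signed_kernel R \<sigma>" "y \<in> signed_kernel R \<sigma>" "\<sigma> \<noteq> 0" "(i, j) \<in> R"
  shows "x$i / y$i = x$j / y$j"
proof -
  have "x$i = \<sigma> * x$j" "y$i = \<sigma> * y$j"
    using assms(1,2,4) by (auto simp: signed_kernel_def)
  then show ?thesis using assms(3) by simp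
qed

lemma signed_kernel_supported_on_component:
  assumes R: "sym R" and C: "C \<in> UNIV // R\<^sup>*" and "signable R \<sigma> C"
  shows "\<exists>x\<in>signed_kernel R \<sigma>. \<forall>i. x$i \<noteq> 0 \<longleftrightarrow> i \<in> C"
proof -
  obtain g where g_nz: "\<forall>i\<in>C. g i \<noteq> 0"
    and g_edge: "\<forall>i\<in>C. \<forall>j\<in>C. (i, j) \<in> R \<longrightarrow> g i = \<sigma> * g j"
    using assms(3) by (auto simp: signable_def)
  have closed: "i \<in> C \<longleftrightarrow> j \<in> C" if "(i, j) \<in> R" for i j
    using that R C in_quotient_imp_closed[OF equiv_rtrancl_sym[OF R] C]
    by (meson r_into_rtrancl symD)
  define x :: "real^_" where "x = (\<chi> i. if i \<in> C then g i else 0)"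
  have "x \<in> signed_kernel R \<sigma>"
    using g_edge closed by (auto simp: signed_kernel_def x_def)
  moreover have "x$i \<noteq> 0 \<longleftrightarrow> i \<in> C" for i
    using g_nz by (simp add: x_def)
  ultimately show ?thesis by blast
qed

lemma component_vector:
  assumes "sym R" "C \<in> UNIV // R\<^sup>*" "signable R \<sigma> C"
  shows component_vector_in_signed_kernel: "component_vector R \<sigma> C \<in> signed_kernel R \<sigma>"
    and component_vector_nonzero_iff: "component_vector R \<sigma> C $ i \<noteq> 0 \<longleftrightarrow> i \<in> C"
  using someI_ex[OF signed_kernel_supported_on_component[OF assms, unfolded Bex_def]]
  unfolding component_vector_def by blast+

lemma signed_kernel_zero_off_signable:
  assumes R: "sym R" and "\<sigma> \<noteq> 0" and x: "x \<in> signed_kernel R \<sigma>"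
    and not_signable: "\<not> signable R \<sigma> (R\<^sup>* `` {i})"
  shows "x$i = 0"
proof (rule ccontr)
  assume "x$i \<noteq> 0"
  have edge: "x$j = \<sigma> * x$k" if "(j, k) \<in> R" for j k
    using x that by (auto simp: signed_kernel_def)
  have "x$j \<noteq> 0" if "j \<in> R\<^sup>* `` {i}" for j
    using eq_along_rtrancl[of R "\<lambda>j. x$j = 0" i j] that \<open>x$i \<noteq> 0\<close> edge \<open>\<sigma> \<noteq> 0\<close> by auto
  then have "signable R \<sigma> (R\<^sup>* `` {i})"
    unfolding signable_def using edge by (intro exI[of _ "\<lambda>j. x$j"]) blast
  with not_signable show False by contradiction
qed

lemma signed_kernel_on_component:
  assumes R: "sym R" and "\<sigma> \<noteq> 0" and x: "x \<in> signed_kernel R \<sigma>"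
    and C: "C \<in> UNIV // R\<^sup>*" "signable R \<sigma> C" and "r \<in> C" "i \<in> C"
  defines "v \<equiv> component_vector R \<sigma> C"
  shows "x$i = x$r / v$r * v$i"
proof -
  have ri: "(r, i) \<in> R\<^sup>*"
    using in_quotient_imp_in_rel[OF equiv_rtrancl_sym[OF R] C(1)] assms(6,7) by blast
  have v: "v \<in> signed_kernel R \<sigma>"
    using component_vector_in_signed_kernel[OF R C] by (simp add: v_def)
  have "x$r / v$r = x$i / v$i"
    using eq_along_rtrancl[OF signed_kernel_quotient_eq[OF x v \<open>\<sigma> \<noteq> 0\<close>] ri] .
  moreover have "v$i \<noteq> 0"
    using component_vector_nonzero_iff[OF R C] assms(7) by (simp add: v_def)
  ultimately show ?thesis by simp
qed

lemma signed_kernel_subset_span: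
  assumes R: "sym R" and "\<sigma> \<noteq> 0"
  shows "signed_kernel R \<sigma> \<subseteq> span (component_vector R \<sigma> ` {C \<in> UNIV // R\<^sup>*. signable R \<sigma> C})"
proof
  fix x assume x: "x \<in> signed_kernel R \<sigma>"
  let ?S = "{C \<in> UNIV // R\<^sup>*. signable R \<sigma> C}"
  let ?v = "component_vector R \<sigma>"
  define c where "c C = x$(SOME r. r \<in> C) / ?v C $ (SOME r. r \<in> C)" for C
  have "x = (\<Sum>C\<in>?S. c C *\<^sub>R ?v C)"
  proof (rule vec_eq_iff[THEN iffD2, rule_format])
    fix i
    define C\<^sub>i where "C\<^sub>i = R\<^sup>* `` {i}"
    have C\<^sub>i: "C\<^sub>i \<in> UNIV // R\<^sup>*" "i \<in> C\<^sub>i"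
      by (simp_all add: C\<^sub>i_def quotientI)
    have other: "?v C $ i = 0" if "C \<in> ?S" "C \<noteq> C\<^sub>i" for C
      using that component_vector_nonzero_iff[OF R] quotient_rtrancl_eq_Image[OF R]
      unfolding C\<^sub>i_def by blast
    have "(\<Sum>C\<in>?S. c C *\<^sub>R ?v C) $ i = (\<Sum>C\<in>?S. c C * ?v C $ i)"
      by (simp add: sum_component)
    also have "\<dots> = (\<Sum>C\<in>?S. if C = C\<^sub>i then c C * ?v C $ i else 0)"
      using other by (intro sum.cong) auto
    also have "\<dots> = (if signable R \<sigma> C\<^sub>i then c C\<^sub>i * ?v C\<^sub>i $ i else 0)"
      using C\<^sub>i by (simp add: sum.delta)
    also have "\<dots> = x$i"
    proof (cases "signable R \<sigma> C\<^sub>i")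
      case True
      have "(SOME r. r \<in> C\<^sub>i) \<in> C\<^sub>i" using C\<^sub>i(2) by (rule someI)
      with True show ?thesis
        using signed_kernel_on_component[OF R \<open>\<sigma> \<noteq> 0\<close> x C\<^sub>i(1) True _ C\<^sub>i(2)]
        by (simp add: c_def)
    next
      case False
      then show ?thesis
        using signed_kernel_zero_off_signable[OF R \<open>\<sigma> \<noteq> 0\<close> x] by (simp add: C\<^sub>i_def)
    qed
    finally show "x$i = (\<Sum>C\<in>?S. c C *\<^sub>R ?v C) $ i" ..
  qed
  also have "\<dots> \<in> span (?v ` ?S)"
    by (intro span_sum span_scale span_base) auto
  finally show "x \<in> span (?v ` ?S)" .
qed

lemma dim_signed_kernel:
  assumes R: "sym R" and "\<sigma> \<noteq> 0"
  shows "dim (signed_kernel R \<sigma>) = card {C \<in> UNIV // R\<^sup>*. signable R \<sigma> C}"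
proof (rule dim_unique)
  let ?S = "{C \<in> UNIV // R\<^sup>*. signable R \<sigma> C}"
  let ?v = "component_vector R \<sigma>"
  have support: "?v C $ i \<noteq> 0 \<longleftrightarrow> i \<in> C" if "C \<in> ?S" for C i
    using component_vector_nonzero_iff[OF R] that by blast
  have nonempty: "C \<noteq> {}" if "C \<in> ?S" for C
    using in_quotient_imp_non_empty[OF equiv_rtrancl_sym[OF R]] that by blast
  have disjoint: "C \<inter> D = {}" if "C \<in> ?S" "D \<in> ?S" "C \<noteq> D" for C D
    using quotient_disj[OF equiv_rtrancl_sym[OF R]] that by blast
  show "?v ` ?S \<subseteq> signed_kernel R \<sigma>"
    using component_vector_in_signed_kernel[OF R] by blast
  show "signed_kernel R \<sigma> \<subseteq> span (?v ` ?S)"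
    by (rule signed_kernel_subset_span[OF R \<open>\<sigma> \<noteq> 0\<close>])
  show "independent (?v ` ?S)"
  proof (rule pairwise_orthogonal_independent)
    have "?v C \<bullet> ?v D = 0" if "C \<in> ?S" "D \<in> ?S" "C \<noteq> D" for C D
      unfolding inner_vec_def using support[OF that(1)] support[OF that(2)] disjoint[OF that]
      by (intro sum.neutral) auto
    then show "pairwise orthogonal (?v ` ?S)"
      unfolding pairwise_def orthogonal_def by blast
    show "0 \<notin> ?v ` ?S"
      using support nonempty by fastforce
  qed
  show "card (?v ` ?S) = card ?S"
  proof (rule card_image, rule inj_onI)
    fix C D assume "C \<in> ?S" "D \<in> ?S" "?v C = ?v D"
    then show "C = D" using support by (metis subsetI subset_antisym)
  qed
qed

lemma is_eigenvalue_iff_geom_mult_pos: "is_eigenvalue M l \<longleftrightarrow> geom_mult M l > 0"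
proof -
  have "geom_mult M l = 0 \<longleftrightarrow> \<not> is_eigenvalue M l"
    by (auto simp: is_eigenvalue_def geom_mult_def)
  then show ?thesis by auto
qed

lemma sym_mat_entry: "sym_mat E $ i $ j = of_bool ((i, j) \<in> undir_edges E)"
  by (simp add: sym_mat_def adj_mat_def undir_edges_def)

lemma deg_mat_diag: "deg_mat E $ i $ i = (\<Sum>j\<in>UNIV. sym_mat E $ i $ j)"
  by (simp add: deg_mat_def sym_mat_def matrix_matrix_mult_def)

lemma deformed_laplacian_unit:
  assumes "\<sigma>\<^sup>2 = (1::real)"
  shows "deformed_laplacian E \<sigma> = deg_mat E - \<sigma> *\<^sub>R sym_mat E"
proof -
  have "\<sigma>^3 = \<sigma>" using assms by (simp add: power3_eq_cube power2_eq_square)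
  then show ?thesis using assms by (simp add: deformed_laplacian_def algebra_simps)
qed

lemma deformed_laplacian_unit_mult:
  assumes "\<sigma>\<^sup>2 = (1::real)"
  shows "(deformed_laplacian E \<sigma> *v x) $ i = (\<Sum>j\<in>UNIV. sym_mat E $ i $ j * (x$i - \<sigma> * x$j))"
proof -
  have "(deg_mat E *v x) $ i = deg_mat E $ i $ i * x$i"
    unfolding matrix_vector_mult_def deg_mat_def
    by (simp only: vec_lambda_beta if_distrib[where f = "\<lambda>z. z * _"] mult_zero_left) simp
  then show ?thesis
    by (simp add: deformed_laplacian_unit[OF assms] matrix_vector_mult_diff_rdistrib deg_mat_diag
        sum_distrib_right sum_distrib_left sum_subtractf algebra_simps matrix_vector_mult_def)
qed

lemma deformed_laplacian_unit_quadratic_form: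
  assumes "\<sigma>\<^sup>2 = (1::real)"
  shows "2 * (x \<bullet> (deformed_laplacian E \<sigma> *v x))
    = (\<Sum>i\<in>UNIV. \<Sum>j\<in>UNIV. sym_mat E $ i $ j * (x$i - \<sigma> * x$j)\<^sup>2)"
proof -
  define p where "p i j = sym_mat E $ i $ j * (x$i * x$i - \<sigma> * x$i * x$j)" for i j
  have form: "x \<bullet> (deformed_laplacian E \<sigma> *v x) = (\<Sum>i\<in>UNIV. \<Sum>j\<in>UNIV. p i j)"
    by (simp add: inner_vec_def deformed_laplacian_unit_mult[OF assms] sum_distrib_left p_def
        algebra_simps)
  have swap: "(\<Sum>i\<in>UNIV. \<Sum>j\<in>UNIV. p i j) = (\<Sum>i\<in>UNIV. \<Sum>j\<in>UNIV. p j i)"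
    by (rule sum.swap)
  have "2 * (x \<bullet> (deformed_laplacian E \<sigma> *v x)) = (\<Sum>i\<in>UNIV. \<Sum>j\<in>UNIV. p i j + p j i)"
    using form swap by (simp add: sum.distrib)
  also have "\<dots> = (\<Sum>i\<in>UNIV. \<Sum>j\<in>UNIV. sym_mat E $ i $ j * (x$i - \<sigma> * x$j)\<^sup>2)"
  proof (intro sum.cong refl)
    fix i j
    have "\<sigma> * (\<sigma> * y) = y" for y
      using assms by (simp add: power2_eq_square mult.assoc[symmetric])
    then show "p i j + p j i = sym_mat E $ i $ j * (x$i - \<sigma> * x$j)\<^sup>2"
      by (simp add: p_def sym_mat_def power2_eq_square algebra_simps)
  qed
  finally show ?thesis .
qed

lemma deformed_laplacian_unit_kernel:
  assumes "\<sigma>\<^sup>2 = (1::real)"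
  shows "{x. deformed_laplacian E \<sigma> *v x = 0} = signed_kernel (undir_edges E) \<sigma>"
proof (intro set_eqI iffI)
  fix x assume "x \<in> {x. deformed_laplacian E \<sigma> *v x = 0}"
  then have "(\<Sum>i\<in>UNIV. \<Sum>j\<in>UNIV. sym_mat E $ i $ j * (x$i - \<sigma> * x$j)\<^sup>2) = 0"
    using deformed_laplacian_unit_quadratic_form[OF assms, of x E, symmetric] by simp
  moreover have nonneg: "sym_mat E $ i $ j * (x$i - \<sigma> * x$j)\<^sup>2 \<ge> 0" for i j
    by (simp add: sym_mat_entry)
  ultimately have "sym_mat E $ i $ j * (x$i - \<sigma> * x$j)\<^sup>2 = 0" for i j
    by (simp add: sum_nonneg sum_nonneg_eq_0_iff)
  then show "x \<in> signed_kernel (undir_edges E) \<sigma>"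
    by (auto simp: signed_kernel_def sym_mat_entry)
next
  fix x assume "x \<in> signed_kernel (undir_edges E) \<sigma>"
  then have summand_zero: "sym_mat E $ i $ j * (x$i - \<sigma> * x$j) = 0" for i j
    by (auto simp: sym_mat_entry signed_kernel_def)
  show "x \<in> {x. deformed_laplacian E \<sigma> *v x = 0}"
    unfolding mem_Collect_eq vec_eq_iff deformed_laplacian_unit_mult[OF assms]
    by (simp add: summand_zero)
qed

lemma geom_mult_deformed_laplacian_unit:
  assumes "\<sigma>\<^sup>2 = (1::real)"
  shows "geom_mult (deformed_laplacian E) \<sigma>
    = card {C \<in> undir_components E. signable (undir_edges E) \<sigma> C}"
proof -
  have "sym (undir_edges E)" by (auto simp: sym_def undir_edges_def)
  moreover have "\<sigma> \<noteq> 0" using assms by auto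
  ultimately show ?thesis
    by (simp add: geom_mult_def deformed_laplacian_unit_kernel[OF assms] dim_signed_kernel
        undir_components_def)
qed

lemma signable_one: "signable R 1 C"
  unfolding signable_def by (intro exI[of _ "\<lambda>_. 1"]) simp

lemma signable_minus_one_iff_bipartite: "signable (undir_edges E) (-1) C \<longleftrightarrow> bipartite_on E C"
proof
  assume "signable (undir_edges E) (-1) C"
  then obtain g :: "_ \<Rightarrow> real" where nonzero: "\<forall>i\<in>C. g i \<noteq> 0"
    and alternating: "\<forall>i\<in>C. \<forall>j\<in>C. (i, j) \<in> undir_edges E \<longrightarrow> g i = - g j"
    unfolding signable_def by auto
  show "bipartite_on E C" unfolding bipartite_on_def
  proof (intro exI[of _ "\<lambda>i. g i > 0"] ballI impI)
    fix i j assume "i \<in> C" "j \<in> C" "(i, j) \<in> undir_edges E"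
    then have "g i = - g j" "g i \<noteq> 0" using nonzero alternating by blast+
    then show "(g i > 0) \<noteq> (g j > 0)" by linarith
  qed
next
  assume "bipartite_on E C"
  then obtain f :: "_ \<Rightarrow> bool" where "\<forall>i\<in>C. \<forall>j\<in>C. (i, j) \<in> undir_edges E \<longrightarrow> f i \<noteq> f j"
    unfolding bipartite_on_def by blast
  then show "signable (undir_edges E) (-1) C"
    unfolding signable_def by (intro exI[of _ "\<lambda>i. if f i then 1 else -1"]) auto
qed

theorem proposition3p5:
  fixes E :: "('n::finite \<times> 'n) set"
  assumes no_loops: "\<forall>i. (i, i) \<notin> E"
  shows "is_eigenvalue (deformed_laplacian E) 1
    \<and> geom_mult (deformed_laplacian E) 1 = card (undir_components E)
    \<and> (is_eigenvalue (deformed_laplacian E) (-1) \<longleftrightarrow>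
         (\<exists>C\<in>undir_components E. bipartite_on E C))
    \<and> (is_eigenvalue (deformed_laplacian E) (-1) \<longrightarrow>
         geom_mult (deformed_laplacian E) (-1) =
           card {C \<in> undir_components E. bipartite_on E C})"
proof -
  have mult_one: "geom_mult (deformed_laplacian E) 1 = card (undir_components E)"
    using geom_mult_deformed_laplacian_unit[of 1] by (simp add: signable_one)
  have mult_minus_one:
    "geom_mult (deformed_laplacian E) (-1) = card {C \<in> undir_components E. bipartite_on E C}"
    using geom_mult_deformed_laplacian_unit[of "-1"] by (simp add: signable_minus_one_iff_bipartite)
  have "undir_components E \<noteq> {}"
    by (simp add: undir_components_def quotient_def)
  then have "is_eigenvalue (deformed_laplacian E) 1"
    by (simp add: is_eigenvalue_iff_geom_mult_pos mult_one card_gt_0_iff)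
  moreover have "is_eigenvalue (deformed_laplacian E) (-1) \<longleftrightarrow>
      (\<exists>C\<in>undir_components E. bipartite_on E C)"
    by (auto simp: is_eigenvalue_iff_geom_mult_pos mult_minus_one card_gt_0_iff)
  ultimately show ?thesis using mult_one mult_minus_one by blast
qed

end
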